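(* Let $H=\sum_{i=1}^d\epsilon_i|e_i\rangle\langle e_i|$ be a non-degenerate Hamiltonian of a $d$-dimensional quantum system, and let $P\subseteq\mathbb{R}^2$ be the set of pairs $(E(\rho),S(\rho))$ over all full-rank passive states $\rho$. Let $\mathcal A:P\to[0,\infty)$ be the geometric athermality. Then $\mathcal A$ is monotonically non-increasing along every activation trajectory in $P$: if $t\mapsto(E(t),S(t))\in P$, $t\in[0,1]$, is a differentiable curve whose tangent vector $(u_E,u_S)$ satisfies $u_E\le0$ and $u_S\ge0$ at every point, then $t\mapsto\mathcal A(E(t),S(t))$ is non-increasing.
   Context: A state $\rho$ is passive if $\mathrm{tr}(HU\rho U^\dagger)\ge\mathrm{tr}(H\rho)$ for all unitaries $U$; passive states commute with $H$, so a full-rank passive state has the form $\rho=\sum_i p_i|e_i\rangle\langle e_i|$ with $p_i>0$. $E(\rho)=\mathrm{tr}[H\rho]$ and $S(\rho)=-\mathrm{tr}[\rho\log\rho]$. The $\epsilon$-$s$ ensemble is $\mathcal V(\rho)=\{(\epsilon_i,-\log p_i)\}_{i=1}^d\subset\mathbb{R}^2$, and $A(\rho)$ denotes the (Euclidean) area of the convex hull $\mathrm{conv}[\mathcal V(\rho)]$. The geometric athermality is $\mathcal A(E,S)=\inf\{A(\rho):\rho$ a full-rank passive state with $E(\rho)=E,\ S(\rho)=S\}$. A curve in the energy-entropy plane with tangent satisfying $u_E\le0$, $u_S\ge0$ everywhere is called an activation trajectory. *)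

theory Defs
  imports "HOL-Analysis.Analysis" "Jordan_Normal_Form.Matrix"
begin

text \<open>We work in the energy eigenbasis e_0, ..., e_(d-1) of H, so H = diag(eps).
  Indices run over {..<d}.\<close>

definition diag_op :: "nat \<Rightarrow> (nat \<Rightarrow> real) \<Rightarrow> complex mat" where
  "diag_op d f = Matrix.mat d d (\<lambda>(i,j). if i = j then complex_of_real (f i) else 0)"

definition mtrace :: "complex mat \<Rightarrow> complex" where
  "mtrace A = (\<Sum>i<dim_row A. A $$ (i,i))"

definition adj :: "complex mat \<Rightarrow> complex mat" where
  "adj U = Matrix.mat (dim_col U) (dim_row U) (\<lambda>(i,j). cnj (U $$ (j,i)))"

definition unitary_mat :: "nat \<Rightarrow> complex mat \<Rightarrow> bool" where
  "unitary_mat d U \<longleftrightarrow> U \<in> carrier_mat d d \<and> adj U * U = 1\<^sub>m d \<and> U * adj U = 1\<^sub>m d"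

definition is_passive :: "nat \<Rightarrow> complex mat \<Rightarrow> complex mat \<Rightarrow> bool" where
  "is_passive d H \<rho> \<longleftrightarrow>
     (\<forall>U. unitary_mat d U \<longrightarrow> Re (mtrace (H * (U * \<rho> * adj U))) \<ge> Re (mtrace (H * \<rho>)))"

definition full_rank_passive :: "nat \<Rightarrow> (nat \<Rightarrow> real) \<Rightarrow> (nat \<Rightarrow> real) \<Rightarrow> bool" where
  "full_rank_passive d eps p \<longleftrightarrow>
     (\<forall>i<d. p i > 0) \<and> (\<Sum>i<d. p i) = 1 \<and>
     is_passive d (diag_op d eps) (diag_op d p)"

definition energy :: "nat \<Rightarrow> (nat \<Rightarrow> real) \<Rightarrow> (nat \<Rightarrow> real) \<Rightarrow> real" where
  "energy d eps p = Re (mtrace (diag_op d eps * diag_op d p))"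

definition entropy :: "nat \<Rightarrow> (nat \<Rightarrow> real) \<Rightarrow> real" where
  "entropy d p = - (\<Sum>i<d. p i * ln (p i))"

definition eps_s_ensemble :: "nat \<Rightarrow> (nat \<Rightarrow> real) \<Rightarrow> (nat \<Rightarrow> real) \<Rightarrow> (real \<times> real) set" where
  "eps_s_ensemble d eps p = (\<lambda>i. (eps i, - ln (p i))) ` {..<d}"

definition hull_area :: "nat \<Rightarrow> (nat \<Rightarrow> real) \<Rightarrow> (nat \<Rightarrow> real) \<Rightarrow> real" where
  "hull_area d eps p = measure lborel (convex hull (eps_s_ensemble d eps p))"

definition ES_region :: "nat \<Rightarrow> (nat \<Rightarrow> real) \<Rightarrow> (real \<times> real) set" where
  "ES_region d eps = {(energy d eps p, entropy d p) | p. full_rank_passive d eps p}"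

definition geom_athermality :: "nat \<Rightarrow> (nat \<Rightarrow> real) \<Rightarrow> real \<Rightarrow> real \<Rightarrow> real" where
  "geom_athermality d eps E S =
     Inf {hull_area d eps p | p. full_rank_passive d eps p \<and> energy d eps p = E \<and> entropy d p = S}"

end

theory Submission
  imports Defs
begin

text \<open>
  A full-rank diagonal state is passive exactly when its populations do not increase with the
  energy: swapping two levels tests one direction, and for the other the squared moduli of a
  unitary form a doubly stochastic matrix, which cannot lower the energy of such a state.

  Given a passive state p0 and a target (E1, S1) with E1 \<le> E(p0) and S1 \<ge> S(p0), deform p0
  into q proportional to p0(i) powr a * exp (- b * eps(i)) with 0 \<le> a \<le> 1 and b \<ge> 0. Then q
  is again passive, and its eps-s ensemble is the image of that of p0 under the shear
  (x, y) \<mapsto> (x, a * y + b * x + ln Z), so the hull area is multiplied by a \<le> 1. For fixed a the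
  energy of q decreases strictly in b, from at least E(p0) (Chebyshev's sum inequality) towards
  the ground energy; this gives a continuous curve b = \<beta>(a) of energy E1. Along it the entropy
  is at most S(p0) at a = 1 and at least S1 at the Gibbs end a = 0, so some point of the curve
  reaches (E1, S1) with a smaller hull.
\<close>

section \<open>Passive diagonal states\<close>

lemma index_mult_mat_sum:
  assumes "A \<in> carrier_mat n m" "B \<in> carrier_mat m l" "i < n" "j < l"
  shows "(A * B) $$ (i,j) = (\<Sum>k<m. A $$ (i,k) * B $$ (k,j))"
  using assms by (simp add: scalar_prod_def atLeast0LessThan)

lemma diag_op_carrier: "diag_op d f \<in> carrier_mat d d"
  by (simp add: diag_op_def)

lemma dim_diag_op [simp]: "dim_row (diag_op d f) = d" "dim_col (diag_op d f) = d"
  by (simp_all add: diag_op_def)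

lemma index_diag_op: "i < d \<Longrightarrow> j < d \<Longrightarrow> diag_op d f $$ (i,j) = (if i = j then of_real (f i) else 0)"
  by (simp add: diag_op_def)

lemma adj_carrier: "U \<in> carrier_mat n m \<Longrightarrow> adj U \<in> carrier_mat m n"
  by (simp add: adj_def)

lemma dim_adj [simp]: "dim_row (adj U) = dim_col U" "dim_col (adj U) = dim_row U"
  by (simp_all add: adj_def)

lemma index_adj: "U \<in> carrier_mat n m \<Longrightarrow> i < m \<Longrightarrow> j < n \<Longrightarrow> adj U $$ (i,j) = cnj (U $$ (j,i))"
  by (simp add: adj_def)

lemma index_diag_op_mult:
  assumes "A \<in> carrier_mat d n" "i < d" "j < n"
  shows "(diag_op d f * A) $$ (i,j) = of_real (f i) * A $$ (i,j)"
proof -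
  have "(diag_op d f * A) $$ (i,j) = (\<Sum>k<d. diag_op d f $$ (i,k) * A $$ (k,j))"
    by (rule index_mult_mat_sum[OF diag_op_carrier assms])
  also have "\<dots> = (\<Sum>k<d. if k = i then of_real (f i) * A $$ (k,j) else 0)"
    using assms(2) by (intro sum.cong) (auto simp: index_diag_op)
  finally show ?thesis using assms(2) by simp
qed

lemma index_mult_diag_op:
  assumes "A \<in> carrier_mat n d" "i < n" "j < d"
  shows "(A * diag_op d f) $$ (i,j) = A $$ (i,j) * of_real (f j)"
proof -
  have "(A * diag_op d f) $$ (i,j) = (\<Sum>k<d. A $$ (i,k) * diag_op d f $$ (k,j))"
    using assms(1) diag_op_carrier assms(2,3) by (rule index_mult_mat_sum)
  also have "\<dots> = (\<Sum>k<d. if k = j then A $$ (i,k) * of_real (f j) else 0)"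
    using assms(3) by (intro sum.cong) (auto simp: index_diag_op)
  finally show ?thesis using assms(3) by simp
qed

lemma mtrace_diag_op_mult:
  assumes "A \<in> carrier_mat d d"
  shows "mtrace (diag_op d f * A) = (\<Sum>i<d. of_real (f i) * A $$ (i,i))"
  using assms by (simp add: mtrace_def index_diag_op_mult diag_op_carrier del: index_mult_mat(1))

lemma energy_eq_sum: "energy d eps p = (\<Sum>i<d. eps i * p i)"
  by (simp add: energy_def mtrace_diag_op_mult index_diag_op diag_op_carrier del: index_mult_mat(1))

lemma index_unitary_conjugate_diag_op:
  assumes U: "U \<in> carrier_mat d d" and k: "k < d"
  shows "(U * diag_op d p * adj U) $$ (k,k) = of_real (\<Sum>j<d. (cmod (U $$ (k,j)))\<^sup>2 * p j)"
proof -
  have "(U * diag_op d p * adj U) $$ (k,k) = (\<Sum>j<d. (U * diag_op d p) $$ (k,j) * adj U $$ (j,k))"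
    using U k by (intro index_mult_mat_sum) (auto intro: mult_carrier_mat diag_op_carrier adj_carrier)
  also have "\<dots> = (\<Sum>j<d. of_real ((cmod (U $$ (k,j)))\<^sup>2 * p j))"
  proof (intro sum.cong refl)
    fix j assume "j \<in> {..<d}"
    then show "(U * diag_op d p) $$ (k,j) * adj U $$ (j,k) = of_real ((cmod (U $$ (k,j)))\<^sup>2 * p j)"
      using U k by (simp add: index_mult_diag_op index_adj of_real_mult complex_norm_square
          ac_simps del: index_mult_mat(1) of_real_power)
  qed
  finally show ?thesis by simp
qed

lemma Re_mtrace_diag_op_unitary_conjugate:
  assumes "U \<in> carrier_mat d d"
  shows "Re (mtrace (diag_op d eps * (U * diag_op d p * adj U)))
           = (\<Sum>k<d. eps k * (\<Sum>j<d. (cmod (U $$ (k,j)))\<^sup>2 * p j))"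
proof -
  have "U * diag_op d p * adj U \<in> carrier_mat d d"
    using assms by (meson mult_carrier_mat adj_carrier diag_op_carrier)
  then show ?thesis
    using assms by (simp add: mtrace_diag_op_mult index_unitary_conjugate_diag_op del: index_mult_mat(1))
qed

lemma unitary_mat_row_norms:
  assumes "unitary_mat d U" "k < d"
  shows "(\<Sum>j<d. (cmod (U $$ (k,j)))\<^sup>2) = 1"
proof -
  have U: "U \<in> carrier_mat d d" "U * adj U = 1\<^sub>m d"
    using assms(1) by (auto simp: unitary_mat_def)
  have "of_real (\<Sum>j<d. (cmod (U $$ (k,j)))\<^sup>2) = (\<Sum>j<d. U $$ (k,j) * adj U $$ (j,k))"
    using U(1) assms(2) by (simp add: index_adj complex_norm_square[symmetric] del: of_real_power)
  also have "\<dots> = (U * adj U) $$ (k,k)"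
    using U(1) adj_carrier[OF U(1)] assms(2) assms(2) by (rule index_mult_mat_sum[symmetric])
  also have "\<dots> = 1"
    using U(2) assms(2) by simp
  finally show ?thesis by (simp only: of_real_eq_1_iff)
qed

lemma unitary_mat_col_norms:
  assumes "unitary_mat d U" "j < d"
  shows "(\<Sum>k<d. (cmod (U $$ (k,j)))\<^sup>2) = 1"
proof -
  have U: "U \<in> carrier_mat d d" "adj U * U = 1\<^sub>m d"
    using assms(1) by (auto simp: unitary_mat_def)
  have "of_real (\<Sum>k<d. (cmod (U $$ (k,j)))\<^sup>2) = (\<Sum>k<d. adj U $$ (j,k) * U $$ (k,j))"
    using U(1) assms(2) by (simp add: index_adj mult.commute complex_norm_square[symmetric] del: of_real_power)
  also have "\<dots> = (adj U * U) $$ (j,j)"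
    using adj_carrier[OF U(1)] U(1) assms(2) assms(2) by (rule index_mult_mat_sum[symmetric])
  also have "\<dots> = 1"
    using U(2) assms(2) by simp
  finally show ?thesis by (simp only: of_real_eq_1_iff)
qed

lemma sum_diff_mult_nonneg_if_upper_sums_nonneg:
  fixes e x :: "'a \<Rightarrow> real"
  assumes "finite I" "\<And>k. k \<in> I \<Longrightarrow> c \<le> e k"
    and "\<And>\<tau>. 0 \<le> (\<Sum>k\<in>{k\<in>I. \<tau> < e k}. x k)"
  shows "0 \<le> (\<Sum>k\<in>I. (e k - c) * x k)"
  using assms
proof (induction I arbitrary: c rule: finite_psubset_induct)
  case (psubset I)
  show ?case
  proof (cases "I = {}")
    case False
    define m where "m = Min (e ` I)"
    define I' where "I' = {k\<in>I. m < e k}"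
    have m_le: "m \<le> e k" if "k \<in> I" for k
      using psubset.hyps that by (simp add: m_def)
    have "m \<in> e ` I"
      unfolding m_def using psubset.hyps False by (intro Min_in) auto
    then obtain a where "a \<in> I" "e a = m"
      by blast
    then have "I' \<subset> I" "c \<le> m"
      using psubset.prems(1) by (auto simp: I'_def)
    have upper_I': "{k\<in>I'. \<tau> < e k} = {k\<in>I. max \<tau> m < e k}" for \<tau>
      by (auto simp: I'_def)
    have "0 \<le> (\<Sum>k\<in>I'. (e k - m) * x k)"
    proof (rule psubset.IH[OF \<open>I' \<subset> I\<close>])
      show "m \<le> e k" if "k \<in> I'" for k
        using that by (simp add: I'_def)
      show "0 \<le> (\<Sum>k\<in>{k\<in>I'. \<tau> < e k}. x k)" for \<tau>
        unfolding upper_I' by (rule psubset.prems(2))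
    qed
    also have "(\<Sum>k\<in>I'. (e k - m) * x k) = (\<Sum>k\<in>I. (e k - m) * x k)"
    proof (rule sum.mono_neutral_left)
      show "\<forall>k\<in>I - I'. (e k - m) * x k = 0"
        using m_le by (force simp: I'_def)
    qed (use psubset.hyps in \<open>auto simp: I'_def\<close>)
    finally have "0 \<le> (\<Sum>k\<in>I. (e k - m) * x k)" .
    moreover have "{k\<in>I. m - 1 < e k} = I"
      using m_le by force
    then have "0 \<le> (\<Sum>k\<in>I. x k)"
      using psubset.prems(2)[of "m - 1"] by simp
    moreover have "(\<Sum>k\<in>I. (e k - c) * x k) = (m - c) * (\<Sum>k\<in>I. x k) + (\<Sum>k\<in>I. (e k - m) * x k)"
      by (simp add: sum_distrib_left sum.distrib[symmetric] algebra_simps)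
    ultimately show ?thesis
      using \<open>c \<le> m\<close> by simp
  qed simp
qed

lemma sum_mult_nonneg_if_upper_sums_nonneg:
  fixes e x :: "'a \<Rightarrow> real"
  assumes "finite I" "(\<Sum>k\<in>I. x k) = 0"
    and "\<And>\<tau>. 0 \<le> (\<Sum>k\<in>{k\<in>I. \<tau> < e k}. x k)"
  shows "0 \<le> (\<Sum>k\<in>I. e k * x k)"
proof (cases "I = {}")
  case False
  define c where "c = Min (e ` I)"
  have "0 \<le> (\<Sum>k\<in>I. (e k - c) * x k)"
    by (rule sum_diff_mult_nonneg_if_upper_sums_nonneg[OF assms(1) _ assms(3)]) (simp add: c_def assms(1))
  also have "\<dots> = (\<Sum>k\<in>I. e k * x k)"
    using assms(2) by (simp add: left_diff_distrib sum_subtractf sum_distrib_left[symmetric])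
  finally show ?thesis .
qed simp

lemma sum_le_sum_mult_if_threshold:
  fixes c p :: "'a \<Rightarrow> real"
  assumes "finite I" "T \<subseteq> I" "\<And>j. j \<in> I \<Longrightarrow> 0 \<le> c j" "\<And>j. j \<in> I \<Longrightarrow> c j \<le> 1"
    and "(\<Sum>j\<in>I. c j) = card T"
    and "\<And>j. j \<in> T \<Longrightarrow> p j \<le> \<theta>" "\<And>j. j \<in> I - T \<Longrightarrow> \<theta> \<le> p j"
  shows "(\<Sum>j\<in>T. p j) \<le> (\<Sum>j\<in>I. c j * p j)"
proof -
  have "0 \<le> (c j - of_bool (j \<in> T)) * (p j - \<theta>)" if "j \<in> I" for j
    using assms(3,4,6,7) that by (cases "j \<in> T") (auto intro: mult_nonneg_nonneg mult_nonpos_nonpos)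
  then have "(\<Sum>j\<in>I. \<theta> * c j - \<theta> * of_bool (j \<in> T)) \<le> (\<Sum>j\<in>I. c j * p j - of_bool (j \<in> T) * p j)"
    by (intro sum_mono) (simp add: algebra_simps)
  then show ?thesis
    using assms(1,2,5) by (simp add: sum_subtractf sum_distrib_left[symmetric] Int_absorb1)
qed

lemma doubly_stochastic_upper_set_sum_le:
  fixes B :: "nat \<Rightarrow> nat \<Rightarrow> real" and eps :: "nat \<Rightarrow> 'a::linorder"
  assumes nonneg: "\<And>k j. k < d \<Longrightarrow> j < d \<Longrightarrow> 0 \<le> B k j"
    and rows: "\<And>k. k < d \<Longrightarrow> (\<Sum>j<d. B k j) = 1"
    and cols: "\<And>j. j < d \<Longrightarrow> (\<Sum>k<d. B k j) = 1"
    and antitone: "\<And>i j. i < d \<Longrightarrow> j < d \<Longrightarrow> eps i < eps j \<Longrightarrow> p j \<le> p i"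
    and T: "T = {k\<in>{..<d}. \<tau> < eps k}"
  shows "(\<Sum>k\<in>T. p k) \<le> (\<Sum>k\<in>T. \<Sum>j<d. B k j * p j)"
proof (cases "T = {}")
  case False
  define \<theta> where "\<theta> = Max (p ` T)"
  have "\<theta> \<in> p ` T"
    unfolding \<theta>_def using False by (intro Max_in) (auto simp: T)
  then obtain k0 where k0: "k0 \<in> T" "p k0 = \<theta>"
    by auto
  define c where "c j = (\<Sum>k\<in>T. B k j)" for j
  have "c j \<le> (\<Sum>k<d. B k j)" if "j < d" for j
    unfolding c_def using nonneg that by (intro sum_mono2) (auto simp: T)
  then have c_le: "c j \<le> 1" if "j < d" for j
    using cols that by fastforce
  have "(\<Sum>j<d. c j) = (\<Sum>k\<in>T. \<Sum>j<d. B k j)"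
    unfolding c_def by (rule sum.swap)
  also have "\<dots> = card T"
    using rows by (simp add: T)
  finally have sum_c: "(\<Sum>j<d. c j) = card T" .
  have "(\<Sum>j\<in>T. p j) \<le> (\<Sum>j<d. c j * p j)"
  proof (rule sum_le_sum_mult_if_threshold[where \<theta> = \<theta>])
    show "p j \<le> \<theta>" if "j \<in> T" for j
      using that by (simp add: \<theta>_def T)
    show "\<theta> \<le> p j" if "j \<in> {..<d} - T" for j
    proof -
      have "j < d" "eps j < eps k0"
        using that k0(1) by (auto simp: T not_less intro: le_less_trans)
      then show ?thesis
        using antitone[of j k0] k0 by (auto simp: T)
    qed
    show "0 \<le> c j" if "j \<in> {..<d}" for j
      unfolding c_def using nonneg that by (intro sum_nonneg) (simp add: T)
  qed (use c_le sum_c in \<open>auto simp: T\<close>)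
  also have "(\<Sum>j<d. c j * p j) = (\<Sum>k\<in>T. \<Sum>j<d. B k j * p j)"
    unfolding c_def sum_distrib_right by (rule sum.swap)
  finally show ?thesis .
qed simp

lemma doubly_stochastic_energy_le:
  fixes B :: "nat \<Rightarrow> nat \<Rightarrow> real"
  assumes nonneg: "\<And>k j. k < d \<Longrightarrow> j < d \<Longrightarrow> 0 \<le> B k j"
    and rows: "\<And>k. k < d \<Longrightarrow> (\<Sum>j<d. B k j) = 1"
    and cols: "\<And>j. j < d \<Longrightarrow> (\<Sum>k<d. B k j) = 1"
    and antitone: "\<And>i j. i < d \<Longrightarrow> j < d \<Longrightarrow> eps i < eps j \<Longrightarrow> p j \<le> p i"
  shows "(\<Sum>k<d. eps k * p k) \<le> (\<Sum>k<d. eps k * (\<Sum>j<d. B k j * p j))"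
proof -
  define x where "x k = (\<Sum>j<d. B k j * p j) - p k" for k
  have "(\<Sum>k<d. \<Sum>j<d. B k j * p j) = (\<Sum>j<d. p j * (\<Sum>k<d. B k j))"
    by (subst sum.swap) (simp add: sum_distrib_left mult.commute)
  then have "(\<Sum>k<d. x k) = 0"
    using cols by (simp add: x_def sum_subtractf)
  moreover have "0 \<le> (\<Sum>k\<in>{k\<in>{..<d}. \<tau> < eps k}. x k)" for \<tau>
    using doubly_stochastic_upper_set_sum_le[OF nonneg rows cols antitone, where \<tau> = \<tau>]
    by (simp add: x_def sum_subtractf)
  ultimately have "0 \<le> (\<Sum>k<d. eps k * x k)"
    by (intro sum_mult_nonneg_if_upper_sums_nonneg) simp_all
  then show ?thesis
    by (simp add: x_def right_diff_distrib sum_subtractf)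
qed

lemma passive_if_antitone:
  assumes "\<And>i j. i < d \<Longrightarrow> j < d \<Longrightarrow> eps i < eps j \<Longrightarrow> p j \<le> p i"
  shows "is_passive d (diag_op d eps) (diag_op d p)"
  unfolding is_passive_def
proof (intro allI impI)
  fix U assume U: "unitary_mat d U"
  then have "U \<in> carrier_mat d d"
    by (simp add: unitary_mat_def)
  have "Re (mtrace (diag_op d eps * diag_op d p)) = (\<Sum>k<d. eps k * p k)"
    using energy_eq_sum by (simp add: energy_def)
  also have "\<dots> \<le> (\<Sum>k<d. eps k * (\<Sum>j<d. (cmod (U $$ (k,j)))\<^sup>2 * p j))"
    using unitary_mat_row_norms[OF U] unitary_mat_col_norms[OF U] assms
    by (intro doubly_stochastic_energy_le) auto
  also have "\<dots> = Re (mtrace (diag_op d eps * (U * diag_op d p * adj U)))"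
    using \<open>U \<in> carrier_mat d d\<close> by (rule Re_mtrace_diag_op_unitary_conjugate[symmetric])
  finally show "Re (mtrace (diag_op d eps * diag_op d p)) \<le> Re (mtrace (diag_op d eps * (U * diag_op d p * adj U)))" .
qed

definition perm_mat :: "nat \<Rightarrow> (nat \<Rightarrow> nat) \<Rightarrow> complex mat" where
  "perm_mat d \<sigma> = Matrix.mat d d (\<lambda>(k,l). if l = \<sigma> k then 1 else 0)"

lemma perm_mat_carrier: "perm_mat d \<sigma> \<in> carrier_mat d d"
  by (simp add: perm_mat_def)

lemma dim_perm_mat [simp]: "dim_row (perm_mat d \<sigma>) = d" "dim_col (perm_mat d \<sigma>) = d"
  by (simp_all add: perm_mat_def)

lemma index_perm_mat: "k < d \<Longrightarrow> l < d \<Longrightarrow> perm_mat d \<sigma> $$ (k,l) = (if l = \<sigma> k then 1 else 0)"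
  by (simp add: perm_mat_def)

lemma adj_perm_mat_mult_perm_mat:
  assumes \<sigma>: "\<sigma> permutes {..<d}"
  shows "adj (perm_mat d \<sigma>) * perm_mat d \<sigma> = 1\<^sub>m d"
proof (rule eq_matI)
  let ?U = "perm_mat d \<sigma>"
  fix a b assume "a < dim_row (1\<^sub>m d)" "b < dim_col (1\<^sub>m d)"
  then have ab: "a < d" "b < d"
    by simp_all
  define g :: "nat \<Rightarrow> complex" where "g l = (if l = a then (if a = b then 1 else 0) else 0)" for l
  have "(adj ?U * ?U) $$ (a,b) = (\<Sum>k<d. adj ?U $$ (a,k) * ?U $$ (k,b))"
    using adj_carrier[OF perm_mat_carrier] perm_mat_carrier ab by (rule index_mult_mat_sum)
  also have "\<dots> = (\<Sum>k<d. g (\<sigma> k))"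
    using ab by (intro sum.cong) (simp_all add: index_adj[OF perm_mat_carrier] index_perm_mat g_def)
  also have "\<dots> = (\<Sum>l<d. g l)"
    using sum.permute[OF \<sigma>, of g] by (simp add: comp_def)
  finally show "(adj ?U * ?U) $$ (a,b) = 1\<^sub>m d $$ (a,b)"
    using ab by (simp add: g_def)
qed simp_all

lemma perm_mat_mult_adj_perm_mat:
  assumes \<sigma>: "\<sigma> permutes {..<d}"
  shows "perm_mat d \<sigma> * adj (perm_mat d \<sigma>) = 1\<^sub>m d"
proof (rule eq_matI)
  let ?U = "perm_mat d \<sigma>"
  fix a b assume "a < dim_row (1\<^sub>m d)" "b < dim_col (1\<^sub>m d)"
  then have ab: "a < d" "b < d"
    by simp_all
  have "(?U * adj ?U) $$ (a,b) = (\<Sum>l<d. ?U $$ (a,l) * adj ?U $$ (l,b))"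
    using perm_mat_carrier adj_carrier[OF perm_mat_carrier] ab by (rule index_mult_mat_sum)
  also have "\<dots> = (\<Sum>l<d. if l = \<sigma> a then (if \<sigma> a = \<sigma> b then 1 else 0) else 0)"
    using ab by (intro sum.cong) (simp_all add: index_adj[OF perm_mat_carrier] index_perm_mat)
  also have "\<dots> = (if a = b then 1 else 0)"
    using ab permutes_in_image[OF \<sigma>] permutes_inj[OF \<sigma>] by (simp add: inj_eq)
  finally show "(?U * adj ?U) $$ (a,b) = 1\<^sub>m d $$ (a,b)"
    using ab by simp
qed simp_all

lemma unitary_perm_mat: "\<sigma> permutes {..<d} \<Longrightarrow> unitary_mat d (perm_mat d \<sigma>)"
  by (simp add: unitary_mat_def perm_mat_carrier adj_perm_mat_mult_perm_mat perm_mat_mult_adj_perm_mat)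

lemma Re_mtrace_diag_op_perm_conjugate:
  assumes "\<sigma> permutes {..<d}"
  shows "Re (mtrace (diag_op d eps * (perm_mat d \<sigma> * diag_op d p * adj (perm_mat d \<sigma>))))
           = (\<Sum>k<d. eps k * p (\<sigma> k))"
proof -
  have "(\<Sum>j<d. (cmod (perm_mat d \<sigma> $$ (k,j)))\<^sup>2 * p j) = p (\<sigma> k)" if "k < d" for k
  proof -
    have "(\<Sum>j<d. (cmod (perm_mat d \<sigma> $$ (k,j)))\<^sup>2 * p j) = (\<Sum>j<d. if j = \<sigma> k then p j else 0)"
      using that by (intro sum.cong) (auto simp: perm_mat_def)
    then show ?thesis
      using that permutes_in_image[OF assms] by simp
  qed
  then show ?thesis
    by (simp add: Re_mtrace_diag_op_unitary_conjugate perm_mat_def)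
qed

lemma antitone_if_passive:
  assumes passive_state: "is_passive d (diag_op d eps) (diag_op d p)"
    and ij: "i < d" "j < d" "eps i < eps j"
  shows "p j \<le> p i"
proof -
  let ?\<sigma> = "Transposition.transpose i j"
  have "i \<noteq> j"
    using ij(3) by auto
  have \<sigma>: "?\<sigma> permutes {..<d}"
    using ij by (simp add: permutes_swap_id)
  have "Re (mtrace (diag_op d eps * diag_op d p))
          \<le> Re (mtrace (diag_op d eps * (perm_mat d ?\<sigma> * diag_op d p * adj (perm_mat d ?\<sigma>))))"
    using passive_state unitary_perm_mat[OF \<sigma>] unfolding is_passive_def by blast
  then have "(\<Sum>k<d. eps k * p k) \<le> (\<Sum>k<d. eps k * p (?\<sigma> k))"
    unfolding Re_mtrace_diag_op_perm_conjugate[OF \<sigma>] energy_def[symmetric] energy_eq_sum .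
  also have "(\<Sum>k<d. eps k * p (?\<sigma> k)) = (\<Sum>k<d. eps k * p k) + (eps j - eps i) * (p i - p j)"
  proof -
    have "(\<Sum>k<d. eps k * p (?\<sigma> k)) - (\<Sum>k<d. eps k * p k) = (\<Sum>k<d. eps k * (p (?\<sigma> k) - p k))"
      by (simp add: right_diff_distrib sum_subtractf)
    also have "\<dots> = (\<Sum>k\<in>{i,j}. eps k * (p (?\<sigma> k) - p k))"
    proof (rule sum.mono_neutral_right)
      show "\<forall>k\<in>{..<d} - {i,j}. eps k * (p (?\<sigma> k) - p k) = 0"
        by (simp add: transpose_apply_other)
    qed (use ij in auto)
    also have "\<dots> = (eps j - eps i) * (p i - p j)"
      using \<open>i \<noteq> j\<close> by (simp add: algebra_simps)
    finally show ?thesis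
      by linarith
  qed
  finally show ?thesis
    using ij(3) by (simp add: zero_le_mult_iff)
qed

lemma full_rank_passive_iff:
  "full_rank_passive d eps p \<longleftrightarrow>
     (\<forall>i<d. 0 < p i) \<and> (\<Sum>i<d. p i) = 1 \<and> (\<forall>i<d. \<forall>j<d. eps i < eps j \<longrightarrow> p j \<le> p i)"
proof -
  have "is_passive d (diag_op d eps) (diag_op d p) \<longleftrightarrow> (\<forall>i<d. \<forall>j<d. eps i < eps j \<longrightarrow> p j \<le> p i)"
  proof
    show "\<forall>i<d. \<forall>j<d. eps i < eps j \<longrightarrow> p j \<le> p i" if "is_passive d (diag_op d eps) (diag_op d p)"
      using antitone_if_passive[OF that] by blast
  qed (rule passive_if_antitone, blast)
  then show ?thesis
    unfolding full_rank_passive_def by blast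
qed

section \<open>Sheared areas and classical inequalities\<close>

lemma emeasure_lborel_affine_image:
  fixes A :: "real set"
  assumes a: "0 \<le> a" and A: "A \<in> sets borel"
  shows "emeasure lborel ((\<lambda>y. a * y + t) ` A) = ennreal a * emeasure lborel A"
proof (cases "a = 0")
  case True
  have "emeasure lborel ((\<lambda>y. a * y + t) ` A) \<le> emeasure lborel {t}"
    using True by (intro emeasure_mono) auto
  then show ?thesis
    using True by simp
next
  case False
  then have "0 < a"
    using a by simp
  define h where "h x = - t / a + (1 / a) * x" for x
  have "(\<lambda>y. a * y + t) ` A = h -` A"
    using \<open>0 < a\<close> by (force simp: h_def field_simps)
  moreover have "emeasure lborel A = ennreal (1 / a) * emeasure lborel (h -` A)"
  proof -
    have "lborel = density (distr lborel borel h) (\<lambda>_. ennreal (1 / a))"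
      using lborel_real_affine[of "1 / a" "- t / a"] \<open>0 < a\<close> unfolding h_def by simp
    then have "emeasure lborel A = emeasure (density (distr lborel borel h) (\<lambda>_. ennreal (1 / a))) A"
      by simp
    also have "\<dots> = ennreal (1 / a) * emeasure (distr lborel borel h) A"
      using A by (simp add: emeasure_density nn_integral_cmult_indicator)
    also have "emeasure (distr lborel borel h) A = emeasure lborel (h -` A)"
    proof -
      have "h \<in> borel_measurable borel"
        unfolding h_def by simp
      then show ?thesis
        using A by (simp add: emeasure_distr)
    qed
    finally show ?thesis .
  qed
  moreover have "ennreal a * ennreal (1 / a) = 1"
    using \<open>0 < a\<close> by (simp add: ennreal_mult[symmetric])
  ultimately show ?thesis
    by (simp add: mult.assoc[symmetric])
qed

lemma measure_shear_image:
  fixes K :: "(real \<times> real) set"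
  assumes K: "compact K" and a: "0 \<le> a"
  shows "measure lborel ((\<lambda>(x,y). (x, a * y + b * x + c)) ` K) = a * measure lborel K"
proof -
  define f where "f = (\<lambda>(x::real, y::real). (x, a * y + b * x + c))"
  have "continuous_on UNIV f"
    unfolding f_def by (auto intro!: continuous_intros simp: case_prod_beta)
  then have "compact (f ` K)"
    using K by (metis compact_continuous_image continuous_on_subset subset_UNIV)
  have sets_pair: "sets (lborel \<Otimes>\<^sub>M lborel) = (sets borel :: (real \<times> real) set set)"
    by (metis lborel_prod sets_lborel)
  have K_sets: "K \<in> sets (lborel \<Otimes>\<^sub>M lborel)" and fK_sets: "f ` K \<in> sets (lborel \<Otimes>\<^sub>M lborel)"
    unfolding sets_pair using K \<open>compact (f ` K)\<close> by (simp_all add: compact_imp_closed borel_closed)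
  have slice: "Pair x -` (f ` K) = (\<lambda>y. a * y + (b * x + c)) ` (Pair x -` K)" for x
    by (force simp: f_def image_iff algebra_simps)
  have "emeasure lborel (f ` K) = (\<integral>\<^sup>+x. emeasure lborel (Pair x -` (f ` K)) \<partial>lborel)"
    using lborel.emeasure_pair_measure_alt[OF fK_sets] by (simp add: lborel_prod)
  also have "\<dots> = (\<integral>\<^sup>+x. ennreal a * emeasure lborel (Pair x -` K) \<partial>lborel)"
    using K_sets by (simp add: slice emeasure_lborel_affine_image[OF a] sets_Pair1[of K, simplified sets_lborel])
  also have "\<dots> = ennreal a * (\<integral>\<^sup>+x. emeasure lborel (Pair x -` K) \<partial>lborel)"
    using K_sets by (intro nn_integral_cmult lborel.measurable_emeasure_Pair)
  also have "(\<integral>\<^sup>+x. emeasure lborel (Pair x -` K) \<partial>lborel) = emeasure lborel K"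
    using lborel.emeasure_pair_measure_alt[OF K_sets] by (simp add: lborel_prod)
  finally show ?thesis
    using a by (simp add: f_def measure_def enn2real_mult)
qed

lemma weighted_Chebyshev_identity:
  fixes w f g :: "'a \<Rightarrow> real"
  assumes "finite I"
  shows "(\<Sum>i\<in>I. \<Sum>j\<in>I. w i * w j * ((f i - f j) * (g i - g j)))
       = 2 * ((\<Sum>i\<in>I. w i) * (\<Sum>i\<in>I. w i * f i * g i) - (\<Sum>i\<in>I. w i * f i) * (\<Sum>i\<in>I. w i * g i))"
proof -
  have "(\<Sum>i\<in>I. \<Sum>j\<in>I. w i * w j * ((f i - f j) * (g i - g j)))
      = (\<Sum>i\<in>I. \<Sum>j\<in>I. (w i * f i * g i) * w j + w i * (w j * f j * g j)
                         - (w i * f i) * (w j * g j) - (w i * g i) * (w j * f j))"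
    by (intro sum.cong refl) (simp add: algebra_simps)
  also have "\<dots> = (\<Sum>i\<in>I. w i * f i * g i) * (\<Sum>j\<in>I. w j) + (\<Sum>i\<in>I. w i) * (\<Sum>j\<in>I. w j * f j * g j)
       - (\<Sum>i\<in>I. w i * f i) * (\<Sum>j\<in>I. w j * g j) - (\<Sum>i\<in>I. w i * g i) * (\<Sum>j\<in>I. w j * f j)"
    by (simp only: sum.distrib sum_subtractf sum_product)
  finally show ?thesis
    by (simp add: algebra_simps)
qed

lemma mult_diff_nonneg_if_similarly_ordered:
  fixes x y u v :: real
  assumes "x < y \<Longrightarrow> u \<le> v" "y < x \<Longrightarrow> v \<le> u"
  shows "0 \<le> (x - y) * (u - v)"
  using assms by (cases x y rule: linorder_cases) (auto intro: mult_nonpos_nonpos)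

lemma weighted_Chebyshev_sum_le:
  fixes w f g :: "'a \<Rightarrow> real"
  assumes "finite I" "\<And>i. i \<in> I \<Longrightarrow> 0 \<le> w i"
    and "\<And>i j. i \<in> I \<Longrightarrow> j \<in> I \<Longrightarrow> f i < f j \<Longrightarrow> g i \<le> g j"
  shows "(\<Sum>i\<in>I. w i * f i) * (\<Sum>i\<in>I. w i * g i) \<le> (\<Sum>i\<in>I. w i) * (\<Sum>i\<in>I. w i * f i * g i)"
proof -
  have "0 \<le> (\<Sum>i\<in>I. \<Sum>j\<in>I. w i * w j * ((f i - f j) * (g i - g j)))"
    using assms by (intro sum_nonneg mult_nonneg_nonneg mult_diff_nonneg_if_similarly_ordered) auto
  then show ?thesis
    unfolding weighted_Chebyshev_identity[OF assms(1)] by simp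
qed

lemma weighted_Chebyshev_sum_less:
  fixes w f g :: "'a \<Rightarrow> real"
  assumes "finite I" "\<And>i. i \<in> I \<Longrightarrow> 0 < w i"
    and "\<And>i j. i \<in> I \<Longrightarrow> j \<in> I \<Longrightarrow> f i < f j \<Longrightarrow> g i \<le> g j"
    and "a \<in> I" "b \<in> I" "f a < f b" "g a < g b"
  shows "(\<Sum>i\<in>I. w i * f i) * (\<Sum>i\<in>I. w i * g i) < (\<Sum>i\<in>I. w i) * (\<Sum>i\<in>I. w i * f i * g i)"
proof -
  have nonneg: "0 \<le> w i * w j * ((f i - f j) * (g i - g j))" if "i \<in> I" "j \<in> I" for i j
    using assms(2,3) that
    by (intro mult_nonneg_nonneg mult_diff_nonneg_if_similarly_ordered) (auto simp: less_imp_le)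
  have "0 < w a * w b * ((f a - f b) * (g a - g b))"
    using assms(2,4-7) by (intro mult_pos_pos mult_neg_neg) auto
  then have "0 < (\<Sum>j\<in>I. w a * w j * ((f a - f j) * (g a - g j)))"
    using nonneg assms(4) by (intro sum_pos2[OF assms(1) assms(5)]) auto
  then have "0 < (\<Sum>i\<in>I. \<Sum>j\<in>I. w i * w j * ((f i - f j) * (g i - g j)))"
    by (rule sum_pos2[OF assms(1) assms(4)]) (use nonneg in \<open>auto intro: sum_nonneg\<close>)
  then show ?thesis
    unfolding weighted_Chebyshev_identity[OF assms(1)] by simp
qed

lemma Gibbs_inequality:
  fixes p q :: "'a \<Rightarrow> real"
  assumes "finite I" "\<And>i. i \<in> I \<Longrightarrow> 0 < p i" "\<And>i. i \<in> I \<Longrightarrow> 0 < q i"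
    and "(\<Sum>i\<in>I. p i) = 1" "(\<Sum>i\<in>I. q i) = 1"
  shows "- (\<Sum>i\<in>I. p i * ln (p i)) \<le> - (\<Sum>i\<in>I. p i * ln (q i))"
proof -
  have "p i * ln (q i) - p i * ln (p i) \<le> q i - p i" if "i \<in> I" for i
  proof -
    have "p i * ln (q i / p i) \<le> p i * (q i / p i - 1)"
      using assms(2,3)[OF that] by (intro mult_left_mono ln_le_minus_one) auto
    then show ?thesis
      using assms(2,3)[OF that] by (simp add: ln_div right_diff_distrib)
  qed
  then have "(\<Sum>i\<in>I. p i * ln (q i) - p i * ln (p i)) \<le> (\<Sum>i\<in>I. q i - p i)"
    by (rule sum_mono)
  then show ?thesis
    using assms(4,5) by (simp add: sum_subtractf)
qed

lemma mult_exp_neg_le: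
  fixes x b :: real
  assumes "0 < b"
  shows "x * exp (- b * x) \<le> 1 / b"
proof -
  have "b * x \<le> exp (b * x)"
    using exp_ge_add_one_self[of "b * x"] by linarith
  then have "b * x * exp (- b * x) \<le> exp (b * x) * exp (- b * x)"
    by (intro mult_right_mono) auto
  also have "\<dots> = 1"
    by (simp add: exp_minus)
  finally show ?thesis
    using assms by (simp add: field_simps mult.assoc)
qed

section \<open>Deforming a passive state\<close>

lemma ground_and_excited_level:
  fixes eps :: "nat \<Rightarrow> 'a::linorder"
  assumes "2 \<le> d" "inj_on eps {..<d}"
  obtains m j where "m < d" "\<And>i. i < d \<Longrightarrow> eps m \<le> eps i" "j < d" "eps m < eps j"
proof -
  have "Min (eps ` {..<d}) \<in> eps ` {..<d}"
    using assms(1) by (intro Min_in) (auto simp: lessThan_empty_iff)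
  then obtain m where m: "m < d" "eps m = Min (eps ` {..<d})"
    by auto
  then have ground: "eps m \<le> eps i" if "i < d" for i
    using that by simp
  define j :: nat where "j = (if m = 0 then 1 else 0)"
  have "j < d" "j \<noteq> m"
    using assms(1) by (auto simp: j_def)
  then have "eps j \<noteq> eps m"
    using inj_onD[OF assms(2), of j m] m(1) by auto
  then show thesis
    using that[OF m(1) ground \<open>j < d\<close>] ground[OF \<open>j < d\<close>] by simp
qed

locale passive_deformation =
  fixes d :: nat and eps p0 :: "nat \<Rightarrow> real"
  assumes p0_pos: "\<And>i. i < d \<Longrightarrow> 0 < p0 i"
    and p0_sum: "(\<Sum>i<d. p0 i) = 1"
    and p0_antitone: "\<And>i j. i < d \<Longrightarrow> j < d \<Longrightarrow> eps i < eps j \<Longrightarrow> p0 j \<le> p0 i"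
    and eps_inj: "inj_on eps {..<d}"
    and two_le_d: "2 \<le> d"
begin

text \<open>\<open>deformed 1 0\<close> is \<open>p0\<close>, and \<open>deformed 0 b\<close> is the Gibbs state at inverse temperature \<open>b\<close>.\<close>

definition weight :: "real \<Rightarrow> real \<Rightarrow> nat \<Rightarrow> real" where
  "weight a b i = exp (a * ln (p0 i) - b * eps i)"

definition partition_sum :: "real \<Rightarrow> real \<Rightarrow> real" where
  "partition_sum a b = (\<Sum>i<d. weight a b i)"

definition deformed :: "real \<Rightarrow> real \<Rightarrow> nat \<Rightarrow> real" where
  "deformed a b i = weight a b i / partition_sum a b"

lemma weight_pos: "0 < weight a b i"
  by (simp add: weight_def)

lemma partition_sum_pos: "0 < partition_sum a b"
  unfolding partition_sum_def using two_le_d by (intro sum_pos) (auto simp: weight_pos lessThan_empty_iff)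

lemma deformed_pos: "0 < deformed a b i"
  by (simp add: deformed_def weight_pos partition_sum_pos)

lemma sum_deformed: "(\<Sum>i<d. deformed a b i) = 1"
  using partition_sum_pos[of a b]
  by (simp add: deformed_def partition_sum_def sum_divide_distrib[symmetric])

lemma ln_deformed: "ln (deformed a b i) = a * ln (p0 i) - b * eps i - ln (partition_sum a b)"
  using weight_pos[of a b i] partition_sum_pos[of a b]
  by (simp add: deformed_def ln_div) (simp add: weight_def)

lemma full_rank_passive_deformed:
  assumes "0 \<le> a" "0 \<le> b"
  shows "full_rank_passive d eps (deformed a b)"
proof -
  have "deformed a b j \<le> deformed a b i" if "i < d" "j < d" "eps i < eps j" for i j
  proof -
    have "a * ln (p0 j) \<le> a * ln (p0 i)"
      using p0_antitone[OF that] p0_pos that assms(1) by (intro mult_left_mono) auto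
    moreover have "b * eps i \<le> b * eps j"
      using that(3) assms(2) by (intro mult_left_mono) auto
    ultimately have "weight a b j \<le> weight a b i"
      by (simp add: weight_def)
    then show ?thesis
      using partition_sum_pos[of a b] by (simp add: deformed_def divide_right_mono)
  qed
  then show ?thesis
    by (simp add: full_rank_passive_iff deformed_pos sum_deformed)
qed

lemma energy_deformed: "energy d eps (deformed a b) = (\<Sum>i<d. weight a b i * eps i) / partition_sum a b"
  by (simp add: energy_eq_sum deformed_def sum_divide_distrib mult.commute)

lemma energy_deformed_strict_antimono:
  assumes "b1 < b2"
  shows "energy d eps (deformed a b2) < energy d eps (deformed a b1)"
proof -
  define r where "r i = exp (- (b2 - b1) * eps i)" for i
  have weight_b2: "weight a b2 i = weight a b1 i * r i" for i
    by (simp add: weight_def r_def exp_add[symmetric] algebra_simps)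
  have r_less_iff: "r j < r i \<longleftrightarrow> eps i < eps j" for i j
    using assms by (simp add: r_def)
  obtain k l where "k < d" "l < d" "eps k < eps l"
    using ground_and_excited_level[OF two_le_d eps_inj] by metis
  then have "(\<Sum>i<d. weight a b1 i * eps i) * (\<Sum>i<d. weight a b1 i * - r i)
             < (\<Sum>i<d. weight a b1 i) * (\<Sum>i<d. weight a b1 i * eps i * - r i)"
    using r_less_iff
    by (intro weighted_Chebyshev_sum_less[where a = k and b = l]) (auto simp: weight_pos less_imp_le)
  then have "(\<Sum>i<d. weight a b1 i * r i * eps i) * partition_sum a b1
             < (\<Sum>i<d. weight a b1 i * eps i) * (\<Sum>i<d. weight a b1 i * r i)"
    by (simp add: partition_sum_def sum_negf algebra_simps)
  moreover have "partition_sum a b2 = (\<Sum>i<d. weight a b1 i * r i)"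
    by (simp add: partition_sum_def weight_b2)
  ultimately show ?thesis
    using partition_sum_pos[of a b1] partition_sum_pos[of a b2]
    by (simp add: energy_deformed weight_b2 divide_less_eq less_divide_eq mult.commute)
qed

lemma energy_le_energy_deformed:
  assumes "a \<le> 1"
  shows "energy d eps p0 \<le> energy d eps (deformed a 0)"
proof -
  define g where "g i = exp ((a - 1) * ln (p0 i))" for i
  have weight_g: "weight a 0 i = p0 i * g i" if "i < d" for i
  proof -
    have "p0 i * g i = exp (ln (p0 i)) * exp ((a - 1) * ln (p0 i))"
      using p0_pos[OF that] by (simp add: g_def)
    also have "\<dots> = weight a 0 i"
      by (simp add: weight_def exp_add[symmetric] algebra_simps)
    finally show ?thesis ..
  qed
  have "g i \<le> g j" if "i < d" "j < d" "eps i < eps j" for i j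
  proof -
    have "ln (p0 j) \<le> ln (p0 i)"
      using p0_antitone[OF that] p0_pos that by simp
    then show ?thesis
      using assms by (simp add: g_def mult_left_mono_neg)
  qed
  then have "(\<Sum>i<d. p0 i * eps i) * (\<Sum>i<d. p0 i * g i) \<le> (\<Sum>i<d. p0 i) * (\<Sum>i<d. p0 i * eps i * g i)"
    by (intro weighted_Chebyshev_sum_le) (auto simp: p0_pos less_imp_le)
  moreover have "partition_sum a 0 = (\<Sum>i<d. p0 i * g i)"
    by (simp add: partition_sum_def weight_g)
  ultimately have "energy d eps p0 * partition_sum a 0 \<le> (\<Sum>i<d. weight a 0 i * eps i)"
    using p0_sum by (simp add: energy_eq_sum weight_g ac_simps)
  then show ?thesis
    using partition_sum_pos[of a 0] by (simp add: energy_deformed le_divide_eq)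
qed

lemma energy_deformed_le:
  assumes m: "m < d" "\<And>i. i < d \<Longrightarrow> eps m \<le> eps i" and a: "0 \<le> a" and b: "0 < b"
  shows "energy d eps (deformed a b) \<le> eps m + d / b"
proof -
  have term_le: "weight a b i * (eps i - eps m) \<le> weight a b m / b" if "i < d" for i
  proof (cases "eps i = eps m")
    case True
    then show ?thesis
      using weight_pos[of a b m] b by simp
  next
    case False
    then have "eps m < eps i"
      using m(2)[OF that] by simp
    then have "a * ln (p0 i) \<le> a * ln (p0 m)"
      using p0_antitone[OF m(1) that] p0_pos[OF that] p0_pos[OF m(1)] a by (intro mult_left_mono) auto
    then have "weight a b i \<le> weight a b m * exp (- b * (eps i - eps m))"
      by (simp add: weight_def exp_add[symmetric] algebra_simps)
    then have "weight a b i * (eps i - eps m) \<le> weight a b m * ((eps i - eps m) * exp (- b * (eps i - eps m)))"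
      using \<open>eps m < eps i\<close> by (simp add: mult_right_mono mult.assoc mult.commute mult.left_commute)
    also have "\<dots> \<le> weight a b m * (1 / b)"
      using mult_exp_neg_le[OF b] weight_pos[of a b m] by (intro mult_left_mono) auto
    finally show ?thesis
      by simp
  qed
  have "(\<Sum>i<d. weight a b i * (eps i - eps m)) \<le> d * (weight a b m / b)"
    using sum_mono[of "{..<d}", OF term_le] by simp
  also have "\<dots> \<le> d * (partition_sum a b / b)"
    unfolding partition_sum_def using m(1) b weight_pos
    by (intro mult_left_mono divide_right_mono member_le_sum) (auto intro: less_imp_le)
  finally have sum_le: "(\<Sum>i<d. weight a b i * (eps i - eps m)) \<le> d * (partition_sum a b / b)" .
  have "energy d eps (deformed a b) - eps m = (\<Sum>i<d. weight a b i * (eps i - eps m)) / partition_sum a b"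
    using partition_sum_pos[of a b]
    by (simp add: energy_deformed field_simps sum_subtractf sum_distrib_left partition_sum_def)
  also have "\<dots> \<le> d * (partition_sum a b / b) / partition_sum a b"
    using sum_le partition_sum_pos[of a b] by (intro divide_right_mono) auto
  also have "\<dots> = d / b"
    using partition_sum_pos[of a b] by simp
  finally show ?thesis
    by simp
qed

lemma continuous_on_energy_deformed:
  assumes "continuous_on S A" "continuous_on S B"
  shows "continuous_on S (\<lambda>x. energy d eps (deformed (A x) (B x)))"
proof -
  have "(\<Sum>i<d. exp (a * ln (p0 i) - b * eps i)) \<noteq> 0" for a b
    using partition_sum_pos[of a b] by (simp add: partition_sum_def weight_def)
  then show ?thesis
    unfolding energy_deformed partition_sum_def weight_def by (intro continuous_intros assms) auto
qed

lemma entropy_deformed: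
  "entropy d (deformed a b) = - (\<Sum>i<d. deformed a b i * (a * ln (p0 i) - b * eps i - ln (partition_sum a b)))"
  by (simp add: entropy_def ln_deformed)

lemma continuous_on_entropy_deformed:
  assumes "continuous_on S A" "continuous_on S B"
  shows "continuous_on S (\<lambda>x. entropy d (deformed (A x) (B x)))"
proof -
  have "(\<Sum>i<d. exp (a * ln (p0 i) - b * eps i)) \<noteq> 0" for a b
    using partition_sum_pos[of a b] by (simp add: partition_sum_def weight_def)
  then show ?thesis
    unfolding entropy_deformed deformed_def partition_sum_def weight_def
    by (intro continuous_intros assms) auto
qed

lemma entropy_deformed_le_entropy:
  assumes b: "0 \<le> b"
  shows "entropy d (deformed 1 b) \<le> entropy d p0"
proof -
  define r where "r i = exp (- b * eps i)" for i
  have weight_r: "weight 1 b i = p0 i * r i" if "i < d" for i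
  proof -
    have "p0 i * r i = exp (ln (p0 i)) * exp (- b * eps i)"
      using p0_pos[OF that] by (simp add: r_def)
    also have "\<dots> = weight 1 b i"
      by (simp add: weight_def exp_add[symmetric])
    finally show ?thesis ..
  qed
  have partition_r: "partition_sum 1 b = (\<Sum>i<d. p0 i * r i)"
    by (simp add: partition_sum_def weight_r)
  have "entropy d (deformed 1 b) \<le> - (\<Sum>i<d. deformed 1 b i * ln (p0 i))"
    unfolding entropy_def using p0_pos p0_sum by (intro Gibbs_inequality) (auto simp: deformed_pos sum_deformed)
  also have "\<dots> = (\<Sum>i<d. p0 i * r i * - ln (p0 i)) / (\<Sum>i<d. p0 i * r i)"
    by (simp add: deformed_def partition_r weight_r sum_divide_distrib[symmetric] sum_negf)
  also have "\<dots> \<le> entropy d p0"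
  proof -
    have "- r i \<le> - r j" if "i < d" "j < d" "- ln (p0 i) < - ln (p0 j)" for i j
    proof -
      have "\<not> eps j < eps i"
        using p0_antitone[of j i] that p0_pos by force
      then show ?thesis
        using b by (simp add: r_def mult_left_mono)
    qed
    then have "(\<Sum>i<d. p0 i * - ln (p0 i)) * (\<Sum>i<d. p0 i * - r i)
               \<le> (\<Sum>i<d. p0 i) * (\<Sum>i<d. p0 i * - ln (p0 i) * - r i)"
      by (intro weighted_Chebyshev_sum_le) (auto simp: p0_pos less_imp_le)
    then have "(\<Sum>i<d. p0 i * r i * - ln (p0 i)) \<le> entropy d p0 * (\<Sum>i<d. p0 i * r i)"
      using p0_sum by (simp add: entropy_def sum_negf algebra_simps)
    then show ?thesis
      using partition_sum_pos[of 1 b] by (simp add: partition_r divide_le_eq)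
  qed
  finally show ?thesis .
qed

lemma entropy_le_entropy_deformed:
  assumes p: "\<And>i. i < d \<Longrightarrow> 0 < p i" "(\<Sum>i<d. p i) = 1"
    and energy_p: "energy d eps p = energy d eps (deformed 0 b)"
  shows "entropy d p \<le> entropy d (deformed 0 b)"
proof -
  have cross_entropy: "- (\<Sum>i<d. q i * ln (deformed 0 b i)) = b * energy d eps q + ln (partition_sum 0 b)"
    if "(\<Sum>i<d. q i) = 1" for q
    using that by (simp add: ln_deformed energy_eq_sum algebra_simps sum.distrib sum_subtractf sum_negf
        sum_distrib_left sum_distrib_right[symmetric])
  have "entropy d p \<le> - (\<Sum>i<d. p i * ln (deformed 0 b i))"
    unfolding entropy_def using p by (intro Gibbs_inequality) (auto simp: deformed_pos sum_deformed)
  also have "\<dots> = - (\<Sum>i<d. deformed 0 b i * ln (deformed 0 b i))"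
    using p(2) sum_deformed energy_p by (simp add: cross_entropy)
  finally show ?thesis
    by (simp add: entropy_def)
qed

lemma energy_deformed_inj: "energy d eps (deformed a b) = energy d eps (deformed a b') \<Longrightarrow> b = b'"
  using energy_deformed_strict_antimono[of b b' a] energy_deformed_strict_antimono[of b' b a]
  by (cases b b' rule: linorder_cases) auto

lemma energy_level_curve:
  assumes m: "m < d" "\<And>i. i < d \<Longrightarrow> eps m \<le> eps i"
    and E1: "eps m < E1" "E1 \<le> energy d eps p0"
  obtains \<beta> where "continuous_on {0..1} \<beta>"
    and "\<And>a. a \<in> {0..1} \<Longrightarrow> 0 \<le> \<beta> a \<and> energy d eps (deformed a (\<beta> a)) = E1"
proof -
  define B where "B = 2 * d / (E1 - eps m)"
  have "0 < B"
    using E1(1) two_le_d by (simp add: B_def)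
  have "\<exists>b. 0 \<le> b \<and> b \<le> B \<and> energy d eps (deformed a b) = E1" if a: "a \<in> {0..1}" for a
  proof (rule IVT2')
    have "energy d eps (deformed a B) \<le> eps m + d / B"
      using energy_deformed_le[OF m] a \<open>0 < B\<close> by simp
    also have "\<dots> \<le> E1"
      using E1(1) two_le_d by (simp add: B_def field_simps)
    finally show "energy d eps (deformed a B) \<le> E1" .
    show "E1 \<le> energy d eps (deformed a 0)"
      using E1(2) energy_le_energy_deformed[of a] a by simp
    show "continuous_on {0..B} (\<lambda>b. energy d eps (deformed a b))"
      by (intro continuous_on_energy_deformed continuous_intros)
  qed (use \<open>0 < B\<close> in simp)
  then obtain \<beta> where \<beta>: "\<And>a. a \<in> {0..1} \<Longrightarrow> \<beta> a \<in> {0..B} \<and> energy d eps (deformed a (\<beta> a)) = E1"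
    by (metis atLeastAtMost_iff)
  \<comment> \<open>By strict monotonicity in \<open>b\<close>, the graph of \<open>\<beta>\<close> is a closed level set in a compact box.\<close>
  have "(\<lambda>a. (a, \<beta> a)) ` {0..1} = {z \<in> {0..1} \<times> {0..B}. energy d eps (deformed (fst z) (snd z)) = E1}"
  proof (intro equalityI subsetI)
    fix z assume "z \<in> {z \<in> {0..1} \<times> {0..B}. energy d eps (deformed (fst z) (snd z)) = E1}"
    then obtain a b where z: "z = (a, b)" "a \<in> {0..1}" "energy d eps (deformed a b) = E1"
      by auto
    have "b = \<beta> a"
      by (rule energy_deformed_inj[of a]) (use \<beta>[OF z(2)] z(3) in simp)
    then show "z \<in> (\<lambda>a. (a, \<beta> a)) ` {0..1}"
      using z by auto
  qed (use \<beta> in auto)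
  moreover have "closed {z \<in> {0..1} \<times> {0..B}. energy d eps (deformed (fst z) (snd z)) = E1}"
    by (intro continuous_closed_preimage_constant continuous_on_energy_deformed continuous_intros closed_Times)
  ultimately have "continuous_on {0..1} \<beta>"
    using \<beta> by (intro continuous_from_closed_graph[of "{0..B}"]) auto
  then show ?thesis
    using \<beta> that by auto
qed

lemma deformation_reaches:
  assumes m: "m < d" "\<And>i. i < d \<Longrightarrow> eps m \<le> eps i"
    and p1: "\<And>i. i < d \<Longrightarrow> 0 < p1 i" "(\<Sum>i<d. p1 i) = 1"
    and E: "eps m < energy d eps p1" "energy d eps p1 \<le> energy d eps p0"
    and S: "entropy d p0 \<le> entropy d p1"
  obtains a b where "a \<in> {0..1}" "0 \<le> b"
    "energy d eps (deformed a b) = energy d eps p1" "entropy d (deformed a b) = entropy d p1"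
proof -
  obtain \<beta> where \<beta>: "continuous_on {0..1} \<beta>"
    "\<And>a. a \<in> {0..1} \<Longrightarrow> 0 \<le> \<beta> a \<and> energy d eps (deformed a (\<beta> a)) = energy d eps p1"
    using energy_level_curve[OF m E] by blast
  have "\<exists>a. 0 \<le> a \<and> a \<le> 1 \<and> entropy d (deformed a (\<beta> a)) = entropy d p1"
  proof (rule IVT2')
    show "entropy d (deformed 1 (\<beta> 1)) \<le> entropy d p1"
      using entropy_deformed_le_entropy[of "\<beta> 1"] \<beta>(2)[of 1] S by simp
    show "entropy d p1 \<le> entropy d (deformed 0 (\<beta> 0))"
      using entropy_le_entropy_deformed[OF p1] \<beta>(2)[of 0] by simp
    show "continuous_on {0..1} (\<lambda>a. entropy d (deformed a (\<beta> a)))"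
      by (intro continuous_on_entropy_deformed continuous_on_id \<beta>(1))
  qed simp
  then show ?thesis
    using \<beta>(2) that by auto
qed

lemma hull_area_deformed:
  assumes "0 \<le> a"
  shows "hull_area d eps (deformed a b) = a * hull_area d eps p0"
proof -
  define c where "c = ln (partition_sum a b)"
  define shear where "shear = (\<lambda>(x::real, y::real). (x, a * y + b * x + c))"
  define L where "L = (\<lambda>(x::real, y::real). (x, a * y + b * x))"
  have "linear L"
    unfolding L_def by (rule linearI) (auto simp: algebra_simps)
  have shear_L: "shear = (\<lambda>z. (0, c) + z) \<circ> L"
    by (auto simp: shear_def L_def fun_eq_iff)
  have hull_shear: "convex hull (shear ` X) = shear ` (convex hull X)" for X
  proof -
    have "convex hull (shear ` X) = (\<lambda>z. (0, c) + z) ` (convex hull (L ` X))"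
      unfolding shear_L image_comp[symmetric] by (rule convex_hull_translation)
    also have "\<dots> = shear ` (convex hull X)"
      unfolding shear_L image_comp[symmetric] convex_hull_linear_image[OF \<open>linear L\<close>] ..
    finally show ?thesis .
  qed
  have "eps_s_ensemble d eps (deformed a b) = shear ` eps_s_ensemble d eps p0"
    by (auto simp: eps_s_ensemble_def shear_def c_def ln_deformed image_image algebra_simps)
  then have "hull_area d eps (deformed a b) = measure lborel (shear ` (convex hull eps_s_ensemble d eps p0))"
    by (simp add: hull_area_def hull_shear)
  also have "\<dots> = a * hull_area d eps p0"
    unfolding shear_def hull_area_def
    by (intro measure_shear_image finite_imp_compact_convex_hull assms) (simp add: eps_s_ensemble_def)
  finally show ?thesis .
qed

end

section \<open>Monotonicity of the geometric athermality\<close>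

lemma ground_energy_less_energy:
  assumes ground: "m < d" "\<And>i. i < d \<Longrightarrow> eps m \<le> eps i"
    and excited: "j < d" "eps m < eps j"
    and p: "\<And>i. i < d \<Longrightarrow> 0 < p i" "(\<Sum>i<d. p i) = 1"
  shows "eps m < energy d eps p"
proof -
  have "0 < p j * (eps j - eps m)"
    using p(1) excited by simp
  also have "\<dots> \<le> (\<Sum>i<d. p i * (eps i - eps m))"
  proof (rule member_le_sum)
    show "0 \<le> p i * (eps i - eps m)" if "i \<in> {..<d} - {j}" for i
      using p(1)[of i] ground(2)[of i] that by simp
  qed (use excited in auto)
  also have "\<dots> = (\<Sum>i<d. eps i * p i) - eps m * (\<Sum>i<d. p i)"
    by (simp add: algebra_simps sum_subtractf sum_distrib_left)
  also have "\<dots> = energy d eps p - eps m"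
    using p(2) by (simp add: energy_eq_sum)
  finally show ?thesis
    by simp
qed

lemma hull_area_nonneg: "0 \<le> hull_area d eps p"
  by (simp add: hull_area_def)

lemma exists_passive_state_with_smaller_hull_area:
  assumes d: "1 \<le> d" and inj: "inj_on eps {..<d}"
    and p0: "full_rank_passive d eps p0" and p1: "full_rank_passive d eps p1"
    and E: "energy d eps p1 \<le> energy d eps p0" and S: "entropy d p0 \<le> entropy d p1"
  obtains q where "full_rank_passive d eps q" "energy d eps q = energy d eps p1"
    "entropy d q = entropy d p1" "hull_area d eps q \<le> hull_area d eps p0"
proof (cases "d = 1")
  case True
  then have "hull_area d eps p1 = 0"
    by (simp add: hull_area_def eps_s_ensemble_def lessThan_Suc measure_def)
  then show ?thesis
    using that p1 hull_area_nonneg[of d eps p0] by simp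
next
  case False
  then have "2 \<le> d"
    using d by simp
  interpret passive_deformation d eps p0
    using p0 inj \<open>2 \<le> d\<close> by unfold_locales (auto simp: full_rank_passive_iff)
  obtain m j where m: "m < d" and ground: "\<And>i. i < d \<Longrightarrow> eps m \<le> eps i"
    and excited: "j < d" "eps m < eps j"
    using ground_and_excited_level[OF \<open>2 \<le> d\<close> inj] by blast
  have p1_state: "\<And>i. i < d \<Longrightarrow> 0 < p1 i" "(\<Sum>i<d. p1 i) = 1"
    using p1 by (auto simp: full_rank_passive_iff)
  have "eps m < energy d eps p1"
    by (rule ground_energy_less_energy[OF m ground excited p1_state])
  then obtain a b where ab: "a \<in> {0..1}" "0 \<le> b"
    "energy d eps (deformed a b) = energy d eps p1" "entropy d (deformed a b) = entropy d p1"
    using deformation_reaches[OF m ground p1_state _ E S] by blast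
  have "hull_area d eps (deformed a b) = a * hull_area d eps p0"
    using ab(1) by (intro hull_area_deformed) simp
  also have "\<dots> \<le> hull_area d eps p0"
    using ab(1) hull_area_nonneg[of d eps p0] by (simp add: mult_left_le_one_le)
  finally show ?thesis
    using ab(1,2) by (intro that[OF full_rank_passive_deformed ab(3,4)]) auto
qed

lemma geom_athermality_antimono:
  assumes d: "1 \<le> d" and inj: "inj_on eps {..<d}"
    and P0: "(E0, S0) \<in> ES_region d eps" and P1: "(E1, S1) \<in> ES_region d eps"
    and E: "E1 \<le> E0" and S: "S0 \<le> S1"
  shows "geom_athermality d eps E1 S1 \<le> geom_athermality d eps E0 S0"
proof -
  define areas where "areas E S =
    {hull_area d eps p | p. full_rank_passive d eps p \<and> energy d eps p = E \<and> entropy d p = S}" for E S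
  obtain p1 where p1: "full_rank_passive d eps p1" "energy d eps p1 = E1" "entropy d p1 = S1"
    using P1 by (auto simp: ES_region_def)
  have "areas E0 S0 \<noteq> {}"
    using P0 by (auto simp: ES_region_def areas_def)
  moreover have "Inf (areas E1 S1) \<le> A" if A: "A \<in> areas E0 S0" for A
  proof -
    obtain p0 where p0: "A = hull_area d eps p0" "full_rank_passive d eps p0"
      "energy d eps p0 = E0" "entropy d p0 = S0"
      using A by (auto simp: areas_def)
    obtain q where "full_rank_passive d eps q" "energy d eps q = E1" "entropy d q = S1"
      and q_area: "hull_area d eps q \<le> hull_area d eps p0"
      using exists_passive_state_with_smaller_hull_area[OF d inj p0(2) p1(1)] p0 p1 E S by auto
    then have "hull_area d eps q \<in> areas E1 S1"
      by (auto simp: areas_def)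
    moreover have "bdd_below (areas E1 S1)"
      by (intro bdd_belowI[of _ 0]) (auto simp: areas_def hull_area_nonneg)
    ultimately have "Inf (areas E1 S1) \<le> hull_area d eps q"
      by (rule cInf_lower)
    then show ?thesis
      using q_area p0(1) by simp
  qed
  ultimately have "Inf (areas E1 S1) \<le> Inf (areas E0 S0)"
    by (rule cInf_greatest)
  then show ?thesis
    by (simp add: geom_athermality_def areas_def)
qed

lemma DERIV_within_nonneg_imp_nondecreasing:
  fixes f f' :: "real \<Rightarrow> real"
  assumes deriv: "\<And>x. x \<in> {a..b} \<Longrightarrow> (f has_real_derivative f' x) (at x within {a..b})"
    and nonneg: "\<And>x. x \<in> {a..b} \<Longrightarrow> 0 \<le> f' x"
    and st: "s \<in> {a..b}" "t \<in> {a..b}" "s \<le> t"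
  shows "f s \<le> f t"
proof (rule DERIV_nonneg_imp_increasing_open[OF st(3)])
  fix x assume "s < x" "x < t"
  then have "a < x" "x < b"
    using st by auto
  then have "(f has_real_derivative f' x) (at x)"
    using deriv[of x] at_within_Icc_at[of a x b] by simp
  then show "\<exists>y. (f has_real_derivative y) (at x) \<and> 0 \<le> y"
    using nonneg[of x] \<open>a < x\<close> \<open>x < b\<close> by auto
next
  have "continuous_on {a..b} f"
    unfolding continuous_on_eq_continuous_within using deriv DERIV_continuous by blast
  then show "continuous_on {s..t} f"
    by (rule continuous_on_subset) (use st in auto)
qed

theorem theorem3:
  fixes d :: nat and eps :: "nat \<Rightarrow> real"
    and E S E' S' :: "real \<Rightarrow> real"
  assumes d_pos: "d \<ge> 1"
    and nondeg: "inj_on eps {..<d}"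
    and in_P: "\<And>t. t \<in> {0..1} \<Longrightarrow> (E t, S t) \<in> ES_region d eps"
    and dE: "\<And>t. t \<in> {0..1} \<Longrightarrow> (E has_real_derivative E' t) (at t within {0..1})"
    and dS: "\<And>t. t \<in> {0..1} \<Longrightarrow> (S has_real_derivative S' t) (at t within {0..1})"
    and uE: "\<And>t. t \<in> {0..1} \<Longrightarrow> E' t \<le> 0"
    and uS: "\<And>t. t \<in> {0..1} \<Longrightarrow> S' t \<ge> 0"
  shows "\<forall>s\<in>{0..1}. \<forall>t\<in>{0..1}. s \<le> t \<longrightarrow>
           geom_athermality d eps (E t) (S t) \<le> geom_athermality d eps (E s) (S s)"
proof (intro ballI impI)
  fix s t :: real
  assume st: "s \<in> {0..1}" "t \<in> {0..1}" "s \<le> t"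
  have "- E s \<le> - E t"
  proof (rule DERIV_within_nonneg_imp_nondecreasing[where a = 0 and b = 1 and f = "\<lambda>x. - E x" and f' = "\<lambda>x. - E' x"])
    show "((\<lambda>x. - E x) has_real_derivative - E' x) (at x within {0..1})" if "x \<in> {0..1}" for x
      using dE[OF that] by (rule DERIV_minus)
  qed (use uE st in auto)
  moreover have "S s \<le> S t"
    using dS uS st by (rule DERIV_within_nonneg_imp_nondecreasing)
  ultimately show "geom_athermality d eps (E t) (S t) \<le> geom_athermality d eps (E s) (S s)"
    using in_P st by (intro geom_athermality_antimono[OF d_pos nondeg]) auto
qed

end
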